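(* For all integers $n\ge 0$ and $t\ge 1$, $$\bigl(F(t-1)-2\bigr)\,c(2^t n)=c\bigl(2^t n+2^{t-1}-1\bigr).$$
   Context: For $n\ge 0$, $c(n)=\sum_{i=0}^{n}\left(\binom{n}{i}\bmod 2\right)2^{i}$, the integer whose binary digits form the $n$-th row of Pascal's triangle modulo $2$. $F(j)=2^{2^j}+1$ is the $j$-th Fermat number. *)

theory Defs
  imports Main
begin

definition c :: "nat \<Rightarrow> nat" where
  "c n = (\<Sum>i=0..n. ((n choose i) mod 2) * 2 ^ i)"

definition F :: "nat \<Rightarrow> nat" where
  "F j = 2 ^ (2 ^ j) + 1"

end

theory Submission
  imports Defs
begin

text \<open>
  Read row n of Pascal's triangle mod 2 as the polynomial
  P_n(x) = \<Sum>_i (n choose i mod 2) x^i, so that c(n) = P_n(2). Lucas' theorem for the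
  prime 2 becomes P_2k(x) = P_k(x^2) and P_(2k+1)(x) = (1 + x) P_k(x^2). Iterating s times
  gives P_(2^s q + r)(x) = P_r(x) P_q(x^(2^s)) for r < 2^s, hence c(2^s q + r) = c(r) c(2^s q);
  and row 2^s - 1 consists of ones, so c(2^s - 1) = 2^(2^s) - 1 = F(s) - 2.
  Take s = t - 1, q = 2n and r = 2^s - 1.
\<close>

lemma binomial_Suc_Suc_Suc_Suc_mod2:
  "(Suc (Suc m) choose Suc (Suc l)) mod 2 = ((m choose l) + (m choose Suc (Suc l))) mod 2"
proof -
  \<comment> \<open>two steps of Pascal's rule: the middle term occurs twice\<close>
  have "(Suc (Suc m) choose Suc (Suc l)) =
      (m choose l) + 2 * (m choose Suc l) + (m choose Suc (Suc l))" by simp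
  then show ?thesis by presburger
qed

lemma binomial_mod2_double:
  "(2*k choose 2*i) mod 2 = (k choose i) mod 2 \<and> (2*k choose Suc (2*i)) mod 2 = 0"
proof (induction k arbitrary: i)
  case 0
  then show ?case by (cases i) auto
next
  case (Suc k)
  show ?case
  proof (cases i)
    case 0
    then show ?thesis by simp
  next
    case (Suc j)
    have double_Suc: "2 * Suc k = Suc (Suc (2*k))" by simp
    have "(2 * Suc k choose 2*i) mod 2 = ((2*k choose 2*j) + (2*k choose 2 * Suc j)) mod 2"
      using binomial_Suc_Suc_Suc_Suc_mod2[of "2*k" "2*j"] by (simp add: double_Suc Suc)
    also have "\<dots> = ((k choose j) + (k choose Suc j)) mod 2"
      using Suc.IH by (metis mod_add_eq)
    also have "\<dots> = (Suc k choose i) mod 2" by (simp add: Suc)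
    finally have even_index: "(2 * Suc k choose 2*i) mod 2 = (Suc k choose i) mod 2" .
    have "(2 * Suc k choose Suc (2*i)) mod 2
        = ((2*k choose Suc (2*j)) + (2*k choose Suc (2 * Suc j))) mod 2"
      using binomial_Suc_Suc_Suc_Suc_mod2[of "2*k" "Suc (2*j)"] by (simp add: double_Suc Suc)
    also have "\<dots> = 0"
      using Suc.IH by (metis mod_add_eq add_0 mod_0)
    finally show ?thesis using even_index by simp
  qed
qed

lemma binomial_mod2_Suc_double:
  "(Suc (2*k) choose 2*i) mod 2 = (k choose i) mod 2"
  "(Suc (2*k) choose Suc (2*i)) mod 2 = (k choose i) mod 2"
proof -
  show "(Suc (2*k) choose 2*i) mod 2 = (k choose i) mod 2"
  proof (cases i)
    case 0
    then show ?thesis by simp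
  next
    case (Suc j)
    have "(Suc (2*k) choose 2*i) = (2*k choose Suc (2*j)) + (2*k choose 2*i)"
      by (simp add: Suc)
    then show ?thesis
      using binomial_mod2_double[of k j] binomial_mod2_double[of k i] by presburger
  qed
  have "(Suc (2*k) choose Suc (2*i)) = (2*k choose 2*i) + (2*k choose Suc (2*i))"
    by simp
  then show "(Suc (2*k) choose Suc (2*i)) mod 2 = (k choose i) mod 2"
    using binomial_mod2_double[of k i] by presburger
qed

definition pascal_poly :: "nat \<Rightarrow> 'a::comm_semiring_1 \<Rightarrow> 'a" where
  "pascal_poly n x = (\<Sum>i\<le>n. of_nat ((n choose i) mod 2) * x ^ i)"

lemma c_eq_pascal_poly: "c n = pascal_poly n 2"
  by (simp add: c_def pascal_poly_def atLeast0AtMost)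

lemma pascal_poly_eq_sum_lessThan:
  assumes "n < m"
  shows "pascal_poly n x = (\<Sum>i<m. of_nat ((n choose i) mod 2) * x ^ i)"
proof -
  have "{..n} \<subseteq> {..<m}" using assms by auto
  then show ?thesis
    unfolding pascal_poly_def
    by (intro sum.mono_neutral_left) (auto simp: binomial_eq_0)
qed

lemma sum_lessThan_double:
  "(\<Sum>i<2*m. f i) = (\<Sum>i<m. f (2*i)) + (\<Sum>i<m. (f (Suc (2*i)) :: 'a::comm_monoid_add))"
  by (induction m) (simp_all add: add_ac)

lemma pascal_poly_double: "pascal_poly (2*k) x = pascal_poly k (x^2)"
proof -
  have "pascal_poly (2*k) x = (\<Sum>i<2 * Suc k. of_nat ((2*k choose i) mod 2) * x ^ i)"
    by (rule pascal_poly_eq_sum_lessThan) simp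
  also have "\<dots> = (\<Sum>i<Suc k. of_nat ((k choose i) mod 2) * (x^2) ^ i)"
    unfolding sum_lessThan_double by (simp add: binomial_mod2_double power_mult)
  also have "\<dots> = pascal_poly k (x^2)"
    by (simp add: pascal_poly_def lessThan_Suc_atMost)
  finally show ?thesis .
qed

lemma pascal_poly_Suc_double: "pascal_poly (Suc (2*k)) x = (1 + x) * pascal_poly k (x^2)"
proof -
  have "pascal_poly (Suc (2*k)) x = (\<Sum>i<2 * Suc k. of_nat ((Suc (2*k) choose i) mod 2) * x ^ i)"
    by (rule pascal_poly_eq_sum_lessThan) simp
  also have "\<dots> = (\<Sum>i<Suc k. of_nat ((k choose i) mod 2) * (x^2) ^ i)
                + x * (\<Sum>i<Suc k. of_nat ((k choose i) mod 2) * (x^2) ^ i)"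
    unfolding sum_lessThan_double binomial_mod2_Suc_double power_Suc power_mult
    by (simp only: sum_distrib_left mult_ac)
  also have "\<dots> = (1 + x) * pascal_poly k (x^2)"
    by (simp add: pascal_poly_def lessThan_Suc_atMost distrib_right)
  finally show ?thesis .
qed

lemma pascal_poly_0 [simp]: "pascal_poly 0 x = 1"
  by (simp add: pascal_poly_def)

lemma pascal_poly_power2_mult_add:
  assumes "r < 2 ^ s"
  shows "pascal_poly (2^s * q + r) x = pascal_poly r x * pascal_poly q (x ^ 2^s)"
  using assms
proof (induction s arbitrary: r x)
  case 0
  then show ?case by simp
next
  case (Suc s)
  have square_power: "(x^2) ^ 2^s = x ^ 2^Suc s"
    by (simp add: power_mult[symmetric] mult.commute)
  consider r' where "r = 2*r'" | r' where "r = Suc (2*r')"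
    using oddE evenE by (metis Suc_eq_plus1)
  then show ?case
  proof cases
    case 1
    then have "r' < 2^s" using Suc.prems by simp
    have "2^Suc s * q + r = 2 * (2^s * q + r')" using 1 by simp
    then show ?thesis
      using Suc.IH[OF \<open>r' < 2^s\<close>] 1 square_power by (simp only: pascal_poly_double)
  next
    case 2
    then have "r' < 2^s" using Suc.prems by simp
    have "2^Suc s * q + r = Suc (2 * (2^s * q + r'))" using 2 by simp
    then show ?thesis
      using Suc.IH[OF \<open>r' < 2^s\<close>] 2 square_power
      by (simp only: pascal_poly_Suc_double mult.assoc)
  qed
qed

lemma pascal_poly_power2_minus_1: "pascal_poly (2^s - 1) x = (\<Sum>i<2^s. x ^ i)"
proof (induction s arbitrary: x)
  case 0
  then show ?case by simp
next
  case (Suc s)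
  have "(1::nat) \<le> 2^s" by simp
  then have "2^Suc s - 1 = Suc (2 * (2^s - 1))" by (simp only: power_Suc)
  then have "pascal_poly (2^Suc s - 1) x = (1 + x) * pascal_poly (2^s - 1) (x^2)"
    by (simp only: pascal_poly_Suc_double)
  also have "\<dots> = (1 + x) * (\<Sum>i<2^s. x ^ (2*i))"
    by (simp only: Suc.IH power_mult)
  also have "\<dots> = (\<Sum>i<2 * 2^s. x ^ i)"
    by (simp add: sum_lessThan_double distrib_right sum_distrib_left sum.distrib)
  finally show ?case by simp
qed

lemma c_power2_mult_add:
  assumes "r < 2 ^ s"
  shows "c (2^s * q + r) = c r * c (2^s * q)"
  using pascal_poly_power2_mult_add[OF assms, of q "2::nat"]
    pascal_poly_power2_mult_add[of 0 s q "2::nat"]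
  by (simp add: c_eq_pascal_poly)

lemma c_power2_minus_1: "c (2^s - 1) = 2 ^ 2^s - 1"
  unfolding c_eq_pascal_poly pascal_poly_power2_minus_1 atLeast0LessThan[symmetric]
  by (rule sum_power2)

theorem lemma1:
  fixes n t :: nat
  assumes "t \<ge> 1"
  shows "(int (F (t - 1)) - 2) * int (c (2 ^ t * n)) = int (c (2 ^ t * n + 2 ^ (t - 1) - 1))"
proof -
  obtain s where t: "t = Suc s" using assms by (cases t) auto
  have "(1::nat) \<le> 2^s" by simp
  then have "2^t * n + 2^(t-1) - 1 = 2^s * (2*n) + (2^s - 1)" using t by simp
  then have "c (2^t * n + 2^(t-1) - 1) = c (2^s - 1) * c (2^s * (2*n))"
    using \<open>1 \<le> 2^s\<close> by (simp only: c_power2_mult_add diff_less zero_less_one)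
  also have "\<dots> = (2 ^ 2^s - 1) * c (2^t * n)"
    using t by (simp only: c_power2_minus_1 power_Suc mult.assoc mult.left_commute)
  finally have "c (2^t * n + 2^(t-1) - 1) = (2 ^ 2^s - 1) * c (2^t * n)" .
  moreover have "(1::nat) \<le> 2 ^ 2^s" by simp
  then have "int (F (t - 1)) - 2 = int (2 ^ 2^s - 1)"
    using t by (simp add: F_def of_nat_diff)
  ultimately show ?thesis by simp
qed

end
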